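(* Let $f:X\to Y$ be a continuous surjective map between compact Hausdorff spaces. Then for all $\mu,\nu\in HX$ and $t\in[0,1]$ we have $e(Hf(\mu),Hf(\nu),t)=Hf(e(\mu,\nu,t))$.
   Context: For a compact Hausdorff space $X$, let $HM(X)$ be the set of all maps $\alpha:[0,1)\to X$ for which there exist $0=t_0<t_1<\dots<t_n=1$ such that $\alpha$ is constant on each $[t_i,t_{i+1})$. Let $C(X)$ be the set of continuous real-valued functions on $X$. For $\varphi\in C(X)$ and $0\le a<b\le 1$ define $\varphi_{(a,b)}:HM(X)\to\mathbb{R}$ by $\varphi_{(a,b)}(\alpha)=\frac{1}{b-a}\int_a^b\varphi(\alpha(t))\,dt$, and let $S_{HM}(X)$ be the set of all such functions. The map $\alpha\mapsto(\varphi_{(a,b)}(\alpha))$ embeds $HM(X)$ into the product $\prod_{\varphi_{(a,b)}\in S_{HM}(X)}[\min\varphi,\max\varphi]$; $HX$ is the closure of the image of $HM(X)$, and $p_{\varphi_{(a,b)}}:HX\to\mathbb{R}$ is the coordinate projection. For continuous $f:X\to Y$, $Hf:HX\to HY$ is the unique continuous map with $p_{\varphi_{(a,b)}}\circ Hf=p_{(\varphi\circ f)_{(a,b)}}$ for all $\varphi\in C(Y)$, $0\le a<b\le1$ (it extends $\alpha\mapsto f\circ\alpha$). The map $e_1:HM(X)\times HM(X)\times[0,1]\to HM(X)$ is given by $e_1(\alpha_1,\alpha_2,t)(l)=\alpha_1(l)$ if $l<t$ and $=\alpha_2(l)$ if $l\ge t$; $e:HX\times HX\times[0,1]\to HX$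 denotes its (unique) continuous extension. *)

theory Defs
  imports "HOL-Analysis.Analysis"
begin

text \<open>HM(X): maps [0,1) -> X that are piecewise constant on finitely many
  half-open intervals [t_i, t_(i+1)) with 0 = t_0 < ... < t_n = 1.
  Paths are total functions real => 'a; only their values on [0,1) matter.\<close>
definition HM :: "'a topology \<Rightarrow> (real \<Rightarrow> 'a) set" where
  "HM X = {\<alpha>. \<alpha> ` {0..<1} \<subseteq> topspace X \<and>
     (\<exists>(n::nat) (tt::nat \<Rightarrow> real). tt 0 = 0 \<and> tt n = 1 \<and>
        (\<forall>i<n. tt i < tt (Suc i)) \<and>
        (\<forall>i<n. \<forall>l\<in>{tt i..<tt (Suc i)}. \<alpha> l = \<alpha> (tt i)))}"

definition avg :: "'a topology \<Rightarrow> ('a \<Rightarrow> real) \<Rightarrow> real \<Rightarrow> real \<Rightarrow> (real \<Rightarrow> 'a) \<Rightarrow> real" where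
  "avg X \<phi> a b = restrict (\<lambda>\<alpha>. (1 / (b - a)) * integral {a..b} (\<lambda>l. \<phi> (\<alpha> l))) (HM X)"

definition SHM :: "'a topology \<Rightarrow> ((real \<Rightarrow> 'a) \<Rightarrow> real) set" where
  "SHM X = {avg X \<phi> a b | \<phi> a b. continuous_map X euclideanreal \<phi> \<and> 0 \<le> a \<and> a < b \<and> b \<le> 1}"

definition emb :: "'a topology \<Rightarrow> (real \<Rightarrow> 'a) \<Rightarrow> ((real \<Rightarrow> 'a) \<Rightarrow> real) \<Rightarrow> real" where
  "emb X \<alpha> = restrict (\<lambda>s. s \<alpha>) (SHM X)"

text \<open>HX as a topological space: the closure of the image of HM(X) in the product
  (taken in the product of the real lines; since the product of the intervals
  [min phi, max phi] is closed and contains the image, closure and subspace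
  topology coincide with those taken in the product of intervals).\<close>
definition HXtop :: "'a topology \<Rightarrow> (((real \<Rightarrow> 'a) \<Rightarrow> real) \<Rightarrow> real) topology" where
  "HXtop X = subtopology (product_topology (\<lambda>_. euclideanreal) (SHM X))
      ((product_topology (\<lambda>_. euclideanreal) (SHM X)) closure_of (emb X ` HM X))"

definition Hf :: "'a topology \<Rightarrow> 'b topology \<Rightarrow> ('a \<Rightarrow> 'b) \<Rightarrow>
    (((real \<Rightarrow> 'a) \<Rightarrow> real) \<Rightarrow> real) \<Rightarrow> (((real \<Rightarrow> 'b) \<Rightarrow> real) \<Rightarrow> real)" where
  "Hf X Y f = (SOME g. continuous_map (HXtop X) (HXtop Y) g \<and>
      (\<forall>\<phi> a b. continuous_map Y euclideanreal \<phi> \<and> 0 \<le> a \<and> a < b \<and> b \<le> 1 \<longrightarrow>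
         (\<forall>\<mu>\<in>topspace (HXtop X). g \<mu> (avg Y \<phi> a b) = \<mu> (avg X (\<phi> \<circ> f) a b))))"

definition e1 :: "(real \<Rightarrow> 'a) \<Rightarrow> (real \<Rightarrow> 'a) \<Rightarrow> real \<Rightarrow> real \<Rightarrow> 'a" where
  "e1 \<alpha>1 \<alpha>2 t = (\<lambda>l. if l < t then \<alpha>1 l else \<alpha>2 l)"

definition ext_e :: "'a topology \<Rightarrow>
    ((((real \<Rightarrow> 'a) \<Rightarrow> real) \<Rightarrow> real) \<times> ((((real \<Rightarrow> 'a) \<Rightarrow> real) \<Rightarrow> real) \<times> real))
      \<Rightarrow> (((real \<Rightarrow> 'a) \<Rightarrow> real) \<Rightarrow> real)" where
  "ext_e X = (SOME g.
      continuous_map (prod_topology (HXtop X) (prod_topology (HXtop X) (top_of_set {0..1}))) (HXtop X) g \<and>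
      (\<forall>\<alpha>1\<in>HM X. \<forall>\<alpha>2\<in>HM X. \<forall>t\<in>{0..1}. g (emb X \<alpha>1, (emb X \<alpha>2, t)) = emb X (e1 \<alpha>1 \<alpha>2 t)))"

end

theory Submission
  imports Defs
begin

text \<open>Every coordinate of \<open>e(\<mu>, \<nu>, t)\<close> is an explicit continuous expression in finitely many
  coordinates of \<open>\<mu>\<close> and \<open>\<nu>\<close>. Let \<open>P \<mu> c = (c - a) * \<mu> (\<phi>_(a,c))\<close>, which on a step path
  \<open>\<alpha>\<close> is the integral of \<open>\<phi> \<circ> \<alpha>\<close> over \<open>[a, c]\<close>, and let \<open>c = max a (min t b)\<close>; then the
  \<open>\<phi>_(a,b)\<close>-coordinate of \<open>e(\<mu>, \<nu>, t)\<close> is \<open>\<nu> (\<phi>_(a,b)) + (P \<mu> c - P \<nu> c) / (b - a)\<close>. This holds on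
  the dense set of step paths, and it defines a continuous map because \<open>P \<mu> c\<close> is Lipschitz in
  \<open>c\<close> uniformly in \<open>\<mu>\<close>; so the same formula also constructs \<open>e\<close>. Since \<open>Hf\<close> acts on coordinates
  by \<open>\<phi> \<mapsto> \<phi> \<circ> f\<close>, both sides of the identity have the same coordinates.\<close>

text \<open>A description of \<open>HM(X)\<close> without ordered partitions, under which closure under \<open>e\<^sub>1\<close>
  is immediate.\<close>
definition constant_between :: "real set \<Rightarrow> (real \<Rightarrow> 'a) \<Rightarrow> bool" where
  "constant_between T \<alpha> \<longleftrightarrow> finite T \<and>
     (\<forall>l l'. 0 \<le> l \<and> l \<le> l' \<and> l' < 1 \<and> T \<inter> {l<..l'} = {} \<longrightarrow> \<alpha> l' = \<alpha> l)"

lemma HM_constant_betweenE: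
  assumes "\<alpha> \<in> HM X"
  obtains T where "constant_between T \<alpha>"
proof -
  obtain n tt where tt: "tt 0 = 0" "tt n = 1" "\<forall>i<n. tt i < tt (Suc i)"
     "\<forall>i<n. \<forall>l\<in>{tt i..<tt (Suc i)}. \<alpha> l = \<alpha> (tt i)"
    using assms unfolding HM_def by blast
  have "\<alpha> l' = \<alpha> l" if l: "0 \<le> l" "l \<le> l'" "l' < 1" "tt ` {..n} \<inter> {l<..l'} = {}" for l l'
  proof -
    define J where "J = {j. j \<le> n \<and> tt j \<le> l}"
    define i where "i = Max J"
    have J: "finite J" "0 \<in> J" unfolding J_def using tt(1) l(1) by auto
    have "i \<in> J" unfolding i_def using J Max_in by blast
    then have i: "i \<le> n" "tt i \<le> l" unfolding J_def by auto
    have "i < n" using i tt(2) l by (cases "i = n") auto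
    then have "Suc i \<notin> J" using Max_ge[OF J(1), of "Suc i"] unfolding i_def by auto
    then have "l < tt (Suc i)" using \<open>i < n\<close> unfolding J_def by auto
    moreover have "tt (Suc i) \<in> tt ` {..n}" using \<open>i < n\<close> by simp
    then have "tt (Suc i) \<notin> {l<..l'}" using l(4) by blast
    ultimately have "l \<in> {tt i..<tt (Suc i)}" "l' \<in> {tt i..<tt (Suc i)}" using i l by auto
    then show ?thesis using tt(4) \<open>i < n\<close> by metis
  qed
  then show thesis by (intro that[of "tt ` {..n}"]) (auto simp: constant_between_def)
qed

lemma constant_between_imp_HM:
  assumes T: "constant_between T \<alpha>" and \<alpha>: "\<alpha> ` {0..<1} \<subseteq> topspace X"
  shows "\<alpha> \<in> HM X"
proof -
  define S where "S = insert 0 (insert 1 (T \<inter> {0..1}))"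
  define xs where "xs = sorted_list_of_set S"
  define n where "n = length xs - 1"
  define tt where "tt i = xs ! i" for i
  have S: "finite S" "S \<subseteq> {0..1}" "0 \<in> S" "1 \<in> S"
    using T unfolding S_def constant_between_def by auto
  have "card S > 0" using S by (auto simp: card_gt_0_iff)
  then have xs: "sorted_wrt (<) xs" "set xs = S" "length xs = Suc n"
    using S unfolding xs_def n_def by auto
  have less: "tt i < tt j \<longleftrightarrow> i < j" if "i \<le> n" "j \<le> n" for i j
    using xs that unfolding tt_def
    by (metis le_imp_less_Suc linorder_neq_iff order_less_asym sorted_wrt_iff_nth_less)
  have in_S: "tt i \<in> S" if "i \<le> n" for i
    using xs that unfolding tt_def by (metis le_imp_less_Suc nth_mem)
  have onto_S: "\<exists>i\<le>n. tt i = s" if "s \<in> S" for s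
    using xs that unfolding tt_def by (metis in_set_conv_nth less_Suc_eq_le)
  have "tt 0 = 0"
    using onto_S[OF S(3)] in_S[of 0] S(2) less[of _ 0] by (force simp: not_less)
  moreover have "tt n = 1"
    using onto_S[OF S(4)] in_S[of n] S(2) less[of n] by (force simp: not_less)
  moreover have "\<alpha> l = \<alpha> (tt i)" if i: "i < n" and l: "l \<in> {tt i..<tt (Suc i)}" for i l
  proof -
    have "tt i \<in> {0..1}" "tt (Suc i) \<in> {0..1}" using in_S[of i] in_S[of "Suc i"] i S(2) by auto
    then have "0 \<le> tt i" "l < 1" using l by auto
    moreover have "T \<inter> {tt i<..l} = {}"
    proof (intro equals0I)
      fix s assume "s \<in> T \<inter> {tt i<..l}"
      then have "s \<in> S" using l \<open>tt i \<in> {0..1}\<close> \<open>tt (Suc i) \<in> {0..1}\<close> unfolding S_def by auto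
      then obtain j where "j \<le> n" "tt j = s" using onto_S by blast
      then show False using less[of i j] less[of j "Suc i"] i \<open>s \<in> T \<inter> {tt i<..l}\<close> l by auto
    qed
    ultimately show ?thesis using T l unfolding constant_between_def atLeastLessThan_iff by blast
  qed
  moreover have "\<forall>i<n. tt i < tt (Suc i)" using less by simp
  ultimately show ?thesis unfolding HM_def using \<alpha> by blast
qed

lemma HM_iff_constant_between:
  "\<alpha> \<in> HM X \<longleftrightarrow> \<alpha> ` {0..<1} \<subseteq> topspace X \<and> (\<exists>T. constant_between T \<alpha>)"
proof
  assume \<alpha>: "\<alpha> \<in> HM X"
  then obtain T where "constant_between T \<alpha>" by (rule HM_constant_betweenE)
  then show "\<alpha> ` {0..<1} \<subseteq> topspace X \<and> (\<exists>T. constant_between T \<alpha>)"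
    using \<alpha> unfolding HM_def by blast
qed (use constant_between_imp_HM in blast)

lemma e1_in_HM:
  assumes "\<alpha> \<in> HM X" "\<beta> \<in> HM X"
  shows "e1 \<alpha> \<beta> t \<in> HM X"
proof -
  obtain A B where A: "constant_between A \<alpha>" and B: "constant_between B \<beta>"
    using assms HM_iff_constant_between by metis
  have "e1 \<alpha> \<beta> t l' = e1 \<alpha> \<beta> t l"
    if l: "0 \<le> l" "l \<le> l'" "l' < 1" "insert t (A \<union> B) \<inter> {l<..l'} = {}" for l l'
  proof -
    have "t \<notin> {l<..l'}" "A \<inter> {l<..l'} = {}" "B \<inter> {l<..l'} = {}" using l(4) by auto
    then have "l' < t \<longleftrightarrow> l < t" "\<alpha> l' = \<alpha> l" "\<beta> l' = \<beta> l"
      using A B l unfolding constant_between_def by auto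
    then show ?thesis by (simp add: e1_def)
  qed
  then have "constant_between (insert t (A \<union> B)) (e1 \<alpha> \<beta> t)"
    using A B unfolding constant_between_def by blast
  then show ?thesis
    using assms unfolding HM_iff_constant_between e1_def by auto
qed

lemma comp_in_HM:
  assumes "\<alpha> \<in> HM X" "continuous_map X Y f"
  shows "f \<circ> \<alpha> \<in> HM Y"
proof -
  obtain T where "constant_between T \<alpha>" using assms(1) HM_constant_betweenE by blast
  then have "constant_between T (f \<circ> \<alpha>)" by (auto simp: constant_between_def)
  moreover have "(f \<circ> \<alpha>) ` {0..<1} \<subseteq> topspace Y"
    using assms unfolding HM_iff_constant_between continuous_map_def by (auto simp: Pi_iff)
  ultimately show ?thesis unfolding HM_iff_constant_between by blast
qed

lemma HM_integrable_on:
  fixes \<phi> :: "'a \<Rightarrow> real"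
  assumes "\<alpha> \<in> HM X"
  shows "(\<lambda>l. \<phi> (\<alpha> l)) integrable_on {0..1}"
proof -
  obtain n tt where tt: "tt 0 = 0" "tt n = 1" "\<forall>i<n. tt i < tt (Suc i)"
     "\<forall>i<n. \<forall>l\<in>{tt i..<tt (Suc i)}. \<alpha> l = \<alpha> (tt i)"
    using assms unfolding HM_def by blast
  have "0 \<le> tt k \<and> (\<lambda>l. \<phi> (\<alpha> l)) integrable_on {0..tt k}" if "k \<le> n" for k
    using that
  proof (induction k)
    case 0
    then show ?case using tt(1) integrable_on_refl[of _ "0::real"] by simp
  next
    case (Suc k)
    then have k: "k < n" "0 \<le> tt k" "(\<lambda>l. \<phi> (\<alpha> l)) integrable_on {0..tt k}" by auto
    have "(\<lambda>l. \<phi> (\<alpha> l)) integrable_on {tt k..tt (Suc k)}"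
    proof (rule integrable_spike_finite[of "{tt (Suc k)}" _ _ "\<lambda>_. \<phi> (\<alpha> (tt k))"])
      fix l assume "l \<in> {tt k..tt (Suc k)} - {tt (Suc k)}"
      then have "l \<in> {tt k..<tt (Suc k)}" by auto
      then show "\<phi> (\<alpha> l) = \<phi> (\<alpha> (tt k))" using tt(4) k(1) by metis
    qed auto
    moreover have "tt k < tt (Suc k)" using tt(3) k by blast
    ultimately show ?case
      using k Henstock_Kurzweil_Integration.integrable_combine[of 0 "tt k" "tt (Suc k)"] by auto
  qed
  then show ?thesis using tt(2) by (metis order_refl)
qed

lemma HM_integrable_on_subinterval:
  fixes \<phi> :: "'a \<Rightarrow> real"
  assumes "\<alpha> \<in> HM X" "0 \<le> a" "b \<le> 1"
  shows "(\<lambda>l. \<phi> (\<alpha> l)) integrable_on {a..b}"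
  using integrable_on_subinterval[OF HM_integrable_on[OF assms(1)]] assms(2,3) by auto

abbreviation admissible :: "'a topology \<Rightarrow> ('a \<Rightarrow> real) \<Rightarrow> real \<Rightarrow> real \<Rightarrow> bool" where
  "admissible X \<phi> a b \<equiv> continuous_map X euclideanreal \<phi> \<and> 0 \<le> a \<and> a < b \<and> b \<le> 1"

lemma avg_in_SHM: "admissible X \<phi> a b \<Longrightarrow> avg X \<phi> a b \<in> SHM X"
  unfolding SHM_def by blast

lemma emb_avg:
  assumes "\<alpha> \<in> HM X" "admissible X \<phi> a b"
  shows "emb X \<alpha> (avg X \<phi> a b) = integral {a..b} (\<lambda>l. \<phi> (\<alpha> l)) / (b - a)"
  using avg_in_SHM[OF assms(2)] assms(1) by (simp add: emb_def avg_def)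

lemma emb_avg_comp:
  assumes "\<alpha> \<in> HM X" "continuous_map X Y f" "admissible Y \<phi> a b"
  shows "emb X \<alpha> (avg X (\<phi> \<circ> f) a b) = emb Y (f \<circ> \<alpha>) (avg Y \<phi> a b)"
proof -
  have "admissible X (\<phi> \<circ> f) a b" using assms(2,3) continuous_map_compose by blast
  then show ?thesis using assms by (simp add: emb_avg comp_in_HM)
qed

definition primitive :: "'a topology \<Rightarrow> ('a \<Rightarrow> real) \<Rightarrow> real \<Rightarrow>
    (((real \<Rightarrow> 'a) \<Rightarrow> real) \<Rightarrow> real) \<Rightarrow> real \<Rightarrow> real" where
  "primitive X \<phi> a \<mu> c = (c - a) * \<mu> (avg X \<phi> a c)"

lemma primitive_emb:
  assumes "\<alpha> \<in> HM X" "continuous_map X euclideanreal \<phi>" "0 \<le> a" "a \<le> c" "c \<le> 1"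
  shows "primitive X \<phi> a (emb X \<alpha>) c = integral {a..c} (\<lambda>l. \<phi> (\<alpha> l))"
  using assms emb_avg[OF assms(1), of \<phi> a c] by (cases "a = c") (auto simp: primitive_def)

definition concat_coord :: "'a topology \<Rightarrow> ('a \<Rightarrow> real) \<Rightarrow> real \<Rightarrow> real \<Rightarrow>
    (((real \<Rightarrow> 'a) \<Rightarrow> real) \<Rightarrow> real) \<Rightarrow> (((real \<Rightarrow> 'a) \<Rightarrow> real) \<Rightarrow> real) \<Rightarrow> real \<Rightarrow> real" where
  "concat_coord X \<phi> a b \<mu> \<nu> t =
     (let c = max a (min t b) in \<nu> (avg X \<phi> a b) + (primitive X \<phi> a \<mu> c - primitive X \<phi> a \<nu> c) / (b - a))"

lemma emb_e1_avg:
  assumes "\<alpha> \<in> HM X" "\<beta> \<in> HM X" "admissible X \<phi> a b"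
  shows "emb X (e1 \<alpha> \<beta> t) (avg X \<phi> a b) = concat_coord X \<phi> a b (emb X \<alpha>) (emb X \<beta>) t"
proof -
  define c where "c = max a (min t b)"
  have c: "a \<le> c" "c \<le> b" unfolding c_def using assms by auto
  let ?I = "\<lambda>\<gamma> a b. integral {a..b} (\<lambda>l. \<phi> (\<gamma> l))"
  have split: "?I \<gamma> a b = ?I \<gamma> a c + ?I \<gamma> c b" if "\<gamma> \<in> HM X" for \<gamma>
    using c assms(3)
    by (intro Henstock_Kurzweil_Integration.integral_combine[symmetric]
        HM_integrable_on_subinterval[OF that]) auto
  have "?I (e1 \<alpha> \<beta> t) a c = ?I \<alpha> a c"
    by (rule integral_spike[of "{c}"]) (auto simp: e1_def c_def)
  moreover have "?I (e1 \<alpha> \<beta> t) c b = ?I \<beta> c b"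
    by (rule integral_spike[of "{c}"]) (auto simp: e1_def c_def)
  ultimately have "?I (e1 \<alpha> \<beta> t) a b = ?I \<beta> a b + (?I \<alpha> a c - ?I \<beta> a c)"
    using split[OF e1_in_HM[OF assms(1,2)]] split[OF assms(2)] by simp
  then show ?thesis
    using assms c unfolding concat_coord_def c_def[symmetric] Let_def
    by (simp add: emb_avg e1_in_HM primitive_emb add_divide_distrib diff_divide_distrib)
qed

lemma topspace_HXtop: "topspace (HXtop X) = powertop_real (SHM X) closure_of (emb X ` HM X)"
  unfolding HXtop_def topspace_subtopology
  using closure_of_subset_topspace[of "powertop_real (SHM X)" "emb X ` HM X"] by blast

lemma emb_in_HXtop: "\<alpha> \<in> HM X \<Longrightarrow> emb X \<alpha> \<in> topspace (HXtop X)"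
  unfolding topspace_HXtop by (intro closure_of_subset[THEN subsetD]) (auto simp: emb_def)

lemma HXtop_closure_of_emb: "HXtop X closure_of (emb X ` HM X) = topspace (HXtop X)"
proof -
  have "powertop_real (SHM X) closure_of (emb X ` HM X) \<inter> emb X ` HM X = emb X ` HM X"
    using emb_in_HXtop topspace_HXtop by blast
  then show ?thesis
    unfolding topspace_HXtop unfolding HXtop_def closure_of_subtopology by simp
qed

lemma HXtop_extensional:
  assumes "\<mu> \<in> topspace (HXtop X)"
  shows "\<mu> \<in> extensional (SHM X)"
proof -
  have "\<mu> \<in> topspace (powertop_real (SHM X))"
    using assms closure_of_subset_topspace[of "powertop_real (SHM X)" "emb X ` HM X"]
    unfolding topspace_HXtop by blast
  then show ?thesis by (simp add: PiE_iff)
qed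

lemma continuous_map_HXtop_coord:
  assumes "continuous_map Z (HXtop X) p" "s \<in> SHM X"
  shows "continuous_map Z euclideanreal (\<lambda>z. p z s)"
proof -
  have "continuous_map Z (powertop_real (SHM X)) p"
    using assms(1) unfolding HXtop_def continuous_map_in_subtopology by blast
  then show ?thesis
    using continuous_map_compose[OF _ continuous_map_product_projection[OF assms(2)]]
    by (simp add: o_def)
qed

lemma continuous_map_into_HXtop:
  assumes g: "continuous_map Z (powertop_real (SHM X)) g"
    and D: "Z closure_of D = topspace Z" "g ` D \<subseteq> emb X ` HM X"
  shows "continuous_map Z (HXtop X) g"
proof -
  have "g ` topspace Z \<subseteq> powertop_real (SHM X) closure_of (g ` D)"
    using continuous_map_image_closure_subset[OF g] D(1) by metis
  also have "\<dots> \<subseteq> powertop_real (SHM X) closure_of (emb X ` HM X)"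
    using D(2) by (rule closure_of_mono)
  finally show ?thesis
    using g unfolding HXtop_def continuous_map_in_subtopology by blast
qed

lemma HXtop_coord_eq:
  assumes "\<mu> \<in> topspace (HXtop X)" "s \<in> SHM X" "s' \<in> SHM X"
    and "\<And>\<alpha>. \<alpha> \<in> HM X \<Longrightarrow> emb X \<alpha> s = emb X \<alpha> s'"
  shows "\<mu> s = \<mu> s'"
proof (rule forall_in_closure_of_eq[where f = "\<lambda>\<mu>. \<mu> s" and g = "\<lambda>\<mu>. \<mu> s'"])
  show "\<mu> \<in> powertop_real (SHM X) closure_of emb X ` HM X"
    using assms(1) topspace_HXtop by blast
  show "continuous_map (powertop_real (SHM X)) euclideanreal (\<lambda>\<mu>. \<mu> s)"
    using assms(2) by (rule continuous_map_product_projection)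
  show "continuous_map (powertop_real (SHM X)) euclideanreal (\<lambda>\<mu>. \<mu> s')"
    using assms(3) by (rule continuous_map_product_projection)
qed (use assms(4) in auto)

lemma HXtop_avg_split:
  assumes "\<mu> \<in> topspace (HXtop X)" "continuous_map X euclideanreal \<phi>" "0 \<le> a" "a < c" "c < b" "b \<le> 1"
  shows "(b - a) * \<mu> (avg X \<phi> a b) = (c - a) * \<mu> (avg X \<phi> a c) + (b - c) * \<mu> (avg X \<phi> c b)"
proof (rule forall_in_closure_of_eq[of \<mu> "powertop_real (SHM X)" "emb X ` HM X" euclideanreal])
  have s: "avg X \<phi> a b \<in> SHM X" "avg X \<phi> a c \<in> SHM X" "avg X \<phi> c b \<in> SHM X"
    using assms by (auto intro!: avg_in_SHM)
  show "\<mu> \<in> powertop_real (SHM X) closure_of emb X ` HM X"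
    using assms(1) topspace_HXtop by blast
  show "continuous_map (powertop_real (SHM X)) euclideanreal (\<lambda>\<mu>. (b - a) * \<mu> (avg X \<phi> a b))"
    using s by (intro continuous_intros continuous_map_product_projection)
  show "continuous_map (powertop_real (SHM X)) euclideanreal
      (\<lambda>\<mu>. (c - a) * \<mu> (avg X \<phi> a c) + (b - c) * \<mu> (avg X \<phi> c b))"
    using s by (intro continuous_intros continuous_map_product_projection)
next
  fix \<mu> assume "\<mu> \<in> emb X ` HM X"
  then obtain \<alpha> where \<alpha>: "\<alpha> \<in> HM X" and \<mu>: "\<mu> = emb X \<alpha>" by blast
  have "integral {a..c} (\<lambda>l. \<phi> (\<alpha> l)) + integral {c..b} (\<lambda>l. \<phi> (\<alpha> l)) = integral {a..b} (\<lambda>l. \<phi> (\<alpha> l))"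
    using assms by (intro Henstock_Kurzweil_Integration.integral_combine HM_integrable_on_subinterval[OF \<alpha>]) auto
  then show "(b - a) * \<mu> (avg X \<phi> a b) = (c - a) * \<mu> (avg X \<phi> a c) + (b - c) * \<mu> (avg X \<phi> c b)"
    using \<alpha> assms by (simp add: \<mu> emb_avg)
qed auto

lemma HXtop_avg_bound:
  assumes "\<mu> \<in> topspace (HXtop X)" "admissible X \<phi> a b" and M: "\<forall>x\<in>topspace X. \<bar>\<phi> x\<bar> \<le> M"
  shows "\<bar>\<mu> (avg X \<phi> a b)\<bar> \<le> M"
proof -
  have bound: "\<bar>emb X \<alpha> (avg X \<phi> a b)\<bar> \<le> M" if \<alpha>: "\<alpha> \<in> HM X" for \<alpha>
  proof -
    \<comment> \<open>The path need not lie in \<open>X\<close> at the endpoint \<open>1\<close>, so it is cut off there.\<close>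
    define g where "g l = (if l = 1 then 0 else \<phi> (\<alpha> l))" for l
    have \<alpha>X: "\<alpha> l \<in> topspace X" if "l \<in> {0..<1}" for l
      using \<alpha> that unfolding HM_def by blast
    then have "0 \<le> M" using M by force
    then have g: "\<bar>g l\<bar> \<le> M" if "l \<in> {a..b}" for l
      using \<alpha>X M assms(2) that unfolding g_def by auto
    have "integral {a..b} (\<lambda>l. \<phi> (\<alpha> l)) = integral {a..b} g"
      by (rule integral_spike[of "{1}"]) (auto simp: g_def)
    moreover have "g integrable_on {a..b}"
      by (rule integrable_spike_finite[of "{1}" _ _ "\<lambda>l. \<phi> (\<alpha> l)"])
         (use HM_integrable_on_subinterval[OF \<alpha>] assms(2) in \<open>auto simp: g_def\<close>)
    then have "\<bar>integral {a..b} g\<bar> \<le> integral {a..b} (\<lambda>_. M)"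
      using integral_norm_bound_integral[of g "{a..b}" "\<lambda>_. M"] g by force
    ultimately have "\<bar>integral {a..b} (\<lambda>l. \<phi> (\<alpha> l))\<bar> \<le> (b - a) * M"
      using assms(2) by simp
    then show ?thesis using emb_avg[OF \<alpha> assms(2)] assms(2) by (simp add: abs_divide pos_divide_le_eq mult.commute)
  qed
  have closed: "closedin (powertop_real (SHM X))
      {\<mu> \<in> topspace (powertop_real (SHM X)). \<bar>\<mu> (avg X \<phi> a b)\<bar> \<in> {..M}}"
    using avg_in_SHM[OF assms(2)]
    by (intro closedin_continuous_map_preimage[where Y = euclideanreal] continuous_intros
        continuous_map_product_projection) auto
  have "\<bar>\<mu> (avg X \<phi> a b)\<bar> \<in> {..M}"
    by (rule forall_in_closure_of[OF assms(1)[unfolded topspace_HXtop] _ closed]) (use bound in auto)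
  then show ?thesis by simp
qed

lemma HXtop_primitive_diff:
  assumes "\<mu> \<in> topspace (HXtop X)" "continuous_map X euclideanreal \<phi>" "0 \<le> a" "a \<le> c" "c < c'" "c' \<le> 1"
  shows "primitive X \<phi> a \<mu> c' - primitive X \<phi> a \<mu> c = (c' - c) * \<mu> (avg X \<phi> c c')"
proof (cases "a = c")
  case False
  then have "a < c" using assms(4) by simp
  then show ?thesis
    using HXtop_avg_split[OF assms(1,2,3) \<open>a < c\<close> assms(5,6)] by (simp add: primitive_def)
qed (simp add: primitive_def)

lemma HXtop_primitive_Lipschitz:
  assumes "\<mu> \<in> topspace (HXtop X)" "continuous_map X euclideanreal \<phi>" "0 \<le> a"
    and "c \<in> {a..1}" "c' \<in> {a..1}" and M: "\<forall>x\<in>topspace X. \<bar>\<phi> x\<bar> \<le> M"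
  shows "\<bar>primitive X \<phi> a \<mu> c' - primitive X \<phi> a \<mu> c\<bar> \<le> M * \<bar>c' - c\<bar>"
proof -
  have *: "\<bar>primitive X \<phi> a \<mu> c' - primitive X \<phi> a \<mu> c\<bar> \<le> M * (c' - c)"
    if "a \<le> c" "c < c'" "c' \<le> 1" for c c'
  proof -
    have "\<bar>\<mu> (avg X \<phi> c c')\<bar> \<le> M" using HXtop_avg_bound[OF assms(1) _ M] assms(2,3) that by auto
    then show ?thesis
      using HXtop_primitive_diff[OF assms(1,2,3) that] that
      by (simp add: abs_mult mult.commute mult_left_mono)
  qed
  show ?thesis
    using *[of c c'] *[of c' c] assms(4,5) by (cases c c' rule: linorder_cases) (auto simp: abs_minus_commute)
qed

lemma continuous_map_Lipschitz_parameter: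
  fixes g :: "'z \<Rightarrow> real \<Rightarrow> real"
  assumes cont: "\<And>c. c \<in> S \<Longrightarrow> continuous_map Z euclideanreal (\<lambda>z. g z c)"
    and Lip: "\<And>z c c'. z \<in> topspace Z \<Longrightarrow> c \<in> S \<Longrightarrow> c' \<in> S \<Longrightarrow> \<bar>g z c' - g z c\<bar> \<le> M * \<bar>c' - c\<bar>"
    and q: "continuous_map Z euclideanreal q" "\<And>z. z \<in> topspace Z \<Longrightarrow> q z \<in> S"
  shows "continuous_map Z euclideanreal (\<lambda>z. g z (q z))"
  unfolding continuous_map_atin limitin_canonical_iff
proof
  fix z0 assume z0: "z0 \<in> topspace Z"
  have "((\<lambda>z. g z (q z0)) \<longlongrightarrow> g z0 (q z0)) (atin Z z0)"
    using cont[OF q(2)[OF z0]] z0 unfolding continuous_map_atin by simp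
  moreover have "((\<lambda>z. g z (q z) - g z (q z0)) \<longlongrightarrow> 0) (atin Z z0)"
  proof (rule Lim_null_comparison)
    have "eventually (\<lambda>z. z \<in> topspace Z) (atin Z z0)"
      unfolding eventually_atin by auto
    then show "eventually (\<lambda>z. norm (g z (q z) - g z (q z0)) \<le> M * \<bar>q z - q z0\<bar>) (atin Z z0)"
      by eventually_elim (use Lip q(2) z0 in auto)
    have "(q \<longlongrightarrow> q z0) (atin Z z0)"
      using q(1) z0 unfolding continuous_map_atin by simp
    then show "((\<lambda>z. M * \<bar>q z - q z0\<bar>) \<longlongrightarrow> 0) (atin Z z0)"
      by (auto intro!: tendsto_eq_intros)
  qed
  ultimately show "((\<lambda>z. g z (q z)) \<longlongrightarrow> g z0 (q z0)) (atin Z z0)"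
    by (auto dest: tendsto_add)
qed

lemma compact_space_continuous_map_real_bounded:
  assumes "compact_space X" "continuous_map X euclideanreal \<phi>"
  obtains M where "\<forall>x\<in>topspace X. \<bar>\<phi> x\<bar> \<le> M"
proof -
  have "compactin euclideanreal (\<phi> ` topspace X)"
    using image_compactin assms unfolding compact_space_def by blast
  then have "bounded (\<phi> ` topspace X)" by (simp add: compact_imp_bounded)
  then show thesis using that unfolding bounded_real by auto
qed

lemma continuous_map_primitive:
  assumes X: "compact_space X" and \<phi>: "continuous_map X euclideanreal \<phi>" and a: "0 \<le> a"
    and p: "continuous_map Z (HXtop X) p"
    and q: "continuous_map Z euclideanreal q" "\<And>z. z \<in> topspace Z \<Longrightarrow> q z \<in> {a..1}"
  shows "continuous_map Z euclideanreal (\<lambda>z. primitive X \<phi> a (p z) (q z))"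
proof -
  obtain M where M: "\<forall>x\<in>topspace X. \<bar>\<phi> x\<bar> \<le> M"
    using compact_space_continuous_map_real_bounded[OF X \<phi>] .
  show ?thesis
  proof (rule continuous_map_Lipschitz_parameter[OF _ _ q, where M = M])
    show "\<bar>primitive X \<phi> a (p z) c' - primitive X \<phi> a (p z) c\<bar> \<le> M * \<bar>c' - c\<bar>"
      if "z \<in> topspace Z" "c \<in> {a..1}" "c' \<in> {a..1}" for z c c'
    proof -
      have "p z \<in> topspace (HXtop X)" using p that(1) by (auto simp: continuous_map_def)
      then show ?thesis using HXtop_primitive_Lipschitz[OF _ \<phi> a that(2,3) M] by blast
    qed
    show "continuous_map Z euclideanreal (\<lambda>z. primitive X \<phi> a (p z) c)" if "c \<in> {a..1}" for c
    proof (cases "c = a")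
      case False
      then have "avg X \<phi> a c \<in> SHM X" using \<phi> a that by (intro avg_in_SHM) auto
      then show ?thesis
        unfolding primitive_def by (intro continuous_intros continuous_map_HXtop_coord[OF p])
    qed (simp add: primitive_def)
  qed
qed

abbreviation concat_domain :: "'a topology \<Rightarrow>
    ((((real \<Rightarrow> 'a) \<Rightarrow> real) \<Rightarrow> real) \<times> ((((real \<Rightarrow> 'a) \<Rightarrow> real) \<Rightarrow> real) \<times> real)) topology" where
  "concat_domain X \<equiv> prod_topology (HXtop X) (prod_topology (HXtop X) (top_of_set {0..1::real}))"

lemma continuous_map_concat_coord:
  assumes X: "compact_space X" and v: "admissible X \<phi> a b"
  shows "continuous_map (concat_domain X) euclideanreal
      (\<lambda>x. concat_coord X \<phi> a b (fst x) (fst (snd x)) (snd (snd x)))"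
proof -
  have \<mu>: "continuous_map (concat_domain X) (HXtop X) fst"
    by (rule continuous_map_fst)
  have \<nu>: "continuous_map (concat_domain X) (HXtop X) (\<lambda>x. fst (snd x))"
    using continuous_map_compose[OF continuous_map_snd continuous_map_fst] by (simp add: o_def)
  have "continuous_map (concat_domain X) (top_of_set {0..1}) (\<lambda>x. snd (snd x))"
    using continuous_map_compose[OF continuous_map_snd continuous_map_snd] by (simp add: o_def)
  then have t: "continuous_map (concat_domain X) euclideanreal (\<lambda>x. snd (snd x))"
    by (rule continuous_map_into_fulltopology)
  have c: "continuous_map (concat_domain X) euclideanreal (\<lambda>x. max a (min (snd (snd x)) b))"
    using t by (intro continuous_intros)
  have "\<And>x. max a (min (snd (snd x)) b) \<in> {a..1}" using v by auto
  then show ?thesis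
    unfolding concat_coord_def Let_def using v avg_in_SHM[OF v]
    by (intro continuous_intros continuous_map_HXtop_coord[OF \<nu>]
        continuous_map_primitive[OF X _ _ \<mu> c] continuous_map_primitive[OF X _ _ \<nu> c]) auto
qed

lemma concat_domain_closure_of_emb:
  "concat_domain X closure_of (emb X ` HM X \<times> (emb X ` HM X \<times> {0..1})) = topspace (concat_domain X)"
  using closure_of_topspace[of "top_of_set {0..1::real}"] by (simp add: closure_of_Times HXtop_closure_of_emb)

text \<open>A coordinate in \<open>S_HM(X)\<close> may arise from several triples \<open>(\<phi>, a, b)\<close>; formulas in terms
  of a chosen triple are shown to be independent of the choice.\<close>
definition avg_rep :: "'a topology \<Rightarrow> ((real \<Rightarrow> 'a) \<Rightarrow> real) \<Rightarrow> ('a \<Rightarrow> real) \<times> real \<times> real" where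
  "avg_rep X s = (SOME (\<phi>, a, b). s = avg X \<phi> a b \<and> admissible X \<phi> a b)"

lemma avg_rep:
  assumes "s \<in> SHM X"
  obtains \<phi> a b where "avg_rep X s = (\<phi>, a, b)" "s = avg X \<phi> a b" "admissible X \<phi> a b"
proof -
  have "\<exists>r. case r of (\<phi>, a, b) \<Rightarrow> s = avg X \<phi> a b \<and> admissible X \<phi> a b"
    using assms unfolding SHM_def by auto
  then have "case avg_rep X s of (\<phi>, a, b) \<Rightarrow> s = avg X \<phi> a b \<and> admissible X \<phi> a b"
    unfolding avg_rep_def by (rule someI_ex)
  then show thesis using that by (auto split: prod.splits)
qed

definition concat_map :: "'a topology \<Rightarrow>
    ((((real \<Rightarrow> 'a) \<Rightarrow> real) \<Rightarrow> real) \<times> ((((real \<Rightarrow> 'a) \<Rightarrow> real) \<Rightarrow> real) \<times> real))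
      \<Rightarrow> (((real \<Rightarrow> 'a) \<Rightarrow> real) \<Rightarrow> real)" where
  "concat_map X x = restrict (\<lambda>s. case avg_rep X s of (\<phi>, a, b) \<Rightarrow>
      concat_coord X \<phi> a b (fst x) (fst (snd x)) (snd (snd x))) (SHM X)"

lemma concat_map_emb:
  assumes "\<alpha> \<in> HM X" "\<beta> \<in> HM X"
  shows "concat_map X (emb X \<alpha>, (emb X \<beta>, t)) = emb X (e1 \<alpha> \<beta> t)"
  unfolding concat_map_def emb_def[of X "e1 \<alpha> \<beta> t"]
proof (rule restrict_ext)
  fix s assume "s \<in> SHM X"
  then obtain \<phi> a b where rep: "avg_rep X s = (\<phi>, a, b)" "s = avg X \<phi> a b" "admissible X \<phi> a b"
    by (rule avg_rep)
  have "s (e1 \<alpha> \<beta> t) = emb X (e1 \<alpha> \<beta> t) s" using \<open>s \<in> SHM X\<close> by (simp add: emb_def)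
  then show "(case avg_rep X s of (\<phi>, a, b) \<Rightarrow> concat_coord X \<phi> a b (fst (emb X \<alpha>, emb X \<beta>, t))
       (fst (snd (emb X \<alpha>, emb X \<beta>, t))) (snd (snd (emb X \<alpha>, emb X \<beta>, t)))) = s (e1 \<alpha> \<beta> t)"
    using emb_e1_avg[OF assms rep(3)] rep(1,2) by simp
qed

lemma continuous_map_concat_map:
  assumes "compact_space X"
  shows "continuous_map (concat_domain X) (HXtop X) (concat_map X)"
proof (rule continuous_map_into_HXtop[OF _ concat_domain_closure_of_emb])
  show "continuous_map (concat_domain X) (powertop_real (SHM X)) (concat_map X)"
    unfolding continuous_map_componentwise
  proof (intro conjI ballI)
    fix s assume "s \<in> SHM X"
    then obtain \<phi> a b where "avg_rep X s = (\<phi>, a, b)" "admissible X \<phi> a b"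
      by (rule avg_rep)
    then show "continuous_map (concat_domain X) euclideanreal (\<lambda>x. concat_map X x s)"
      using continuous_map_concat_coord[OF assms] \<open>s \<in> SHM X\<close> by (simp add: concat_map_def)
  qed (auto simp: concat_map_def)
  show "concat_map X ` (emb X ` HM X \<times> (emb X ` HM X \<times> {0..1})) \<subseteq> emb X ` HM X"
    using concat_map_emb e1_in_HM by fastforce
qed

lemma ext_e_spec:
  assumes "compact_space X"
  shows "continuous_map (concat_domain X) (HXtop X) (ext_e X)"
    and "\<And>\<alpha> \<beta> t. \<alpha> \<in> HM X \<Longrightarrow> \<beta> \<in> HM X \<Longrightarrow> t \<in> {0..1} \<Longrightarrow>
      ext_e X (emb X \<alpha>, (emb X \<beta>, t)) = emb X (e1 \<alpha> \<beta> t)"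
proof -
  have "continuous_map (concat_domain X) (HXtop X) (ext_e X) \<and>
      (\<forall>\<alpha>\<in>HM X. \<forall>\<beta>\<in>HM X. \<forall>t\<in>{0..1}. ext_e X (emb X \<alpha>, (emb X \<beta>, t)) = emb X (e1 \<alpha> \<beta> t))"
    unfolding ext_e_def
    by (rule someI[where x = "concat_map X"]) (use continuous_map_concat_map[OF assms] concat_map_emb in blast)
  then show "continuous_map (concat_domain X) (HXtop X) (ext_e X)"
    and "\<And>\<alpha> \<beta> t. \<alpha> \<in> HM X \<Longrightarrow> \<beta> \<in> HM X \<Longrightarrow> t \<in> {0..1} \<Longrightarrow>
      ext_e X (emb X \<alpha>, (emb X \<beta>, t)) = emb X (e1 \<alpha> \<beta> t)"
    by auto
qed

lemma ext_e_avg: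
  assumes X: "compact_space X" and v: "admissible X \<phi> a b" and x: "x \<in> topspace (concat_domain X)"
  shows "ext_e X x (avg X \<phi> a b) = concat_coord X \<phi> a b (fst x) (fst (snd x)) (snd (snd x))"
proof (rule forall_in_closure_of_eq[where f = "\<lambda>x. ext_e X x (avg X \<phi> a b)"])
  show "x \<in> concat_domain X closure_of (emb X ` HM X \<times> (emb X ` HM X \<times> {0..1}))"
    using x concat_domain_closure_of_emb by blast
  show "continuous_map (concat_domain X) euclideanreal (\<lambda>x. ext_e X x (avg X \<phi> a b))"
    using continuous_map_HXtop_coord[OF ext_e_spec(1)[OF X] avg_in_SHM[OF v]] .
  show "continuous_map (concat_domain X) euclideanreal
      (\<lambda>x. concat_coord X \<phi> a b (fst x) (fst (snd x)) (snd (snd x)))"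
    using continuous_map_concat_coord[OF X v] .
next
  fix y assume "y \<in> emb X ` HM X \<times> (emb X ` HM X \<times> {0..1::real})"
  then obtain \<alpha> \<beta> t where y: "y = (emb X \<alpha>, (emb X \<beta>, t))" "\<alpha> \<in> HM X" "\<beta> \<in> HM X" "t \<in> {0..1::real}"
    by auto
  then show "ext_e X y (avg X \<phi> a b) = concat_coord X \<phi> a b (fst y) (fst (snd y)) (snd (snd y))"
    using ext_e_spec(2)[OF X y(2-4)] emb_e1_avg[OF y(2,3) v] by simp
qed auto

definition Hf_map :: "'a topology \<Rightarrow> 'b topology \<Rightarrow> ('a \<Rightarrow> 'b) \<Rightarrow>
    (((real \<Rightarrow> 'a) \<Rightarrow> real) \<Rightarrow> real) \<Rightarrow> (((real \<Rightarrow> 'b) \<Rightarrow> real) \<Rightarrow> real)" where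
  "Hf_map X Y f \<mu> = restrict (\<lambda>s. case avg_rep Y s of (\<phi>, a, b) \<Rightarrow> \<mu> (avg X (\<phi> \<circ> f) a b)) (SHM Y)"

lemma Hf_map_avg:
  assumes \<mu>: "\<mu> \<in> topspace (HXtop X)" and f: "continuous_map X Y f" and v: "admissible Y \<phi> a b"
  shows "Hf_map X Y f \<mu> (avg Y \<phi> a b) = \<mu> (avg X (\<phi> \<circ> f) a b)"
proof -
  have s: "avg Y \<phi> a b \<in> SHM Y" using avg_in_SHM[OF v] .
  then obtain \<psi> a' b' where rep: "avg_rep Y (avg Y \<phi> a b) = (\<psi>, a', b')"
    and eq: "avg Y \<phi> a b = avg Y \<psi> a' b'" and v': "admissible Y \<psi> a' b'"
    by (rule avg_rep)
  have "admissible X (\<phi> \<circ> f) a b" "admissible X (\<psi> \<circ> f) a' b'"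
    using v v' f continuous_map_compose by blast+
  then have "\<mu> (avg X (\<psi> \<circ> f) a' b') = \<mu> (avg X (\<phi> \<circ> f) a b)"
    using HXtop_coord_eq[OF \<mu>] avg_in_SHM emb_avg_comp[OF _ f v] emb_avg_comp[OF _ f v'] eq
    by metis
  then show ?thesis using s rep by (simp add: Hf_map_def)
qed

lemma Hf_map_emb:
  assumes "\<alpha> \<in> HM X" "continuous_map X Y f"
  shows "Hf_map X Y f (emb X \<alpha>) = emb Y (f \<circ> \<alpha>)"
  unfolding Hf_map_def emb_def[of Y]
proof (rule restrict_ext)
  fix s assume "s \<in> SHM Y"
  then obtain \<phi> a b where "avg_rep Y s = (\<phi>, a, b)" "s = avg Y \<phi> a b" "admissible Y \<phi> a b"
    by (rule avg_rep)
  then show "(case avg_rep Y s of (\<phi>, a, b) \<Rightarrow> emb X \<alpha> (avg X (\<phi> \<circ> f) a b)) = s (f \<circ> \<alpha>)"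
    using emb_avg_comp[OF assms] \<open>s \<in> SHM Y\<close> by (simp add: emb_def)
qed

lemma continuous_map_Hf_map:
  assumes f: "continuous_map X Y f"
  shows "continuous_map (HXtop X) (HXtop Y) (Hf_map X Y f)"
proof (rule continuous_map_into_HXtop[OF _ HXtop_closure_of_emb])
  show "continuous_map (HXtop X) (powertop_real (SHM Y)) (Hf_map X Y f)"
    unfolding continuous_map_componentwise
  proof (intro conjI ballI)
    fix s assume "s \<in> SHM Y"
    then obtain \<phi> a b where "avg_rep Y s = (\<phi>, a, b)" "admissible Y \<phi> a b"
      by (rule avg_rep)
    moreover have "admissible X (\<phi> \<circ> f) a b"
      using calculation(2) f continuous_map_compose by blast
    ultimately show "continuous_map (HXtop X) euclideanreal (\<lambda>\<mu>. Hf_map X Y f \<mu> s)"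
      using \<open>s \<in> SHM Y\<close> continuous_map_HXtop_coord[OF continuous_map_id avg_in_SHM]
      by (simp add: Hf_map_def)
  qed (auto simp: Hf_map_def)
  show "Hf_map X Y f ` emb X ` HM X \<subseteq> emb Y ` HM Y"
    using Hf_map_emb[OF _ f] comp_in_HM[OF _ f] by auto
qed

lemma Hf_spec:
  assumes "continuous_map X Y f"
  shows "continuous_map (HXtop X) (HXtop Y) (Hf X Y f)"
    and "\<And>\<mu>. \<mu> \<in> topspace (HXtop X) \<Longrightarrow> admissible Y \<phi> a b \<Longrightarrow>
      Hf X Y f \<mu> (avg Y \<phi> a b) = \<mu> (avg X (\<phi> \<circ> f) a b)"
proof -
  have "continuous_map (HXtop X) (HXtop Y) (Hf X Y f) \<and>
      (\<forall>\<phi> a b. admissible Y \<phi> a b \<longrightarrow>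
         (\<forall>\<mu>\<in>topspace (HXtop X). Hf X Y f \<mu> (avg Y \<phi> a b) = \<mu> (avg X (\<phi> \<circ> f) a b)))"
    unfolding Hf_def
    by (rule someI[where x = "Hf_map X Y f"])
       (use continuous_map_Hf_map[OF assms] Hf_map_avg[OF _ assms] in blast)
  then show "continuous_map (HXtop X) (HXtop Y) (Hf X Y f)"
    and "\<And>\<mu>. \<mu> \<in> topspace (HXtop X) \<Longrightarrow> admissible Y \<phi> a b \<Longrightarrow>
      Hf X Y f \<mu> (avg Y \<phi> a b) = \<mu> (avg X (\<phi> \<circ> f) a b)"
    by auto
qed

lemma concat_coord_Hf:
  assumes f: "continuous_map X Y f" and v: "admissible Y \<phi> a b"
    and \<mu>: "\<mu> \<in> topspace (HXtop X)" and \<nu>: "\<nu> \<in> topspace (HXtop X)"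
  shows "concat_coord Y \<phi> a b (Hf X Y f \<mu>) (Hf X Y f \<nu>) t = concat_coord X (\<phi> \<circ> f) a b \<mu> \<nu> t"
proof -
  have "primitive Y \<phi> a (Hf X Y f \<rho>) c = primitive X (\<phi> \<circ> f) a \<rho> c"
    if "\<rho> \<in> topspace (HXtop X)" "a \<le> c" "c \<le> b" for \<rho> c
    using Hf_spec(2)[OF f that(1), of \<phi> a c] v that by (cases "a = c") (auto simp: primitive_def)
  then show ?thesis
    using Hf_spec(2)[OF f \<nu> v] \<mu> \<nu> v by (simp add: concat_coord_def Let_def)
qed

theorem lemma3p1:
  fixes X :: "'a topology" and Y :: "'b topology" and f :: "'a \<Rightarrow> 'b"
  assumes "compact_space X" "Hausdorff_space X"
    and "compact_space Y" "Hausdorff_space Y"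
    and "continuous_map X Y f" "f ` topspace X = topspace Y"
    and "\<mu> \<in> topspace (HXtop X)" "\<nu> \<in> topspace (HXtop X)" "t \<in> {0..1::real}"
  shows "ext_e Y (Hf X Y f \<mu>, (Hf X Y f \<nu>, t)) = Hf X Y f (ext_e X (\<mu>, (\<nu>, t)))"
proof -
  have xX: "(\<mu>, (\<nu>, t)) \<in> topspace (concat_domain X)" using assms(7-9) by simp
  have xY: "(Hf X Y f \<mu>, (Hf X Y f \<nu>, t)) \<in> topspace (concat_domain Y)"
    using assms(7-9) Hf_spec(1)[OF assms(5)] by (auto simp: continuous_map_def)
  have eX: "ext_e X (\<mu>, (\<nu>, t)) \<in> topspace (HXtop X)"
    using ext_e_spec(1)[OF assms(1)] xX by (auto simp: continuous_map_def)
  have "ext_e Y (Hf X Y f \<mu>, (Hf X Y f \<nu>, t)) s = Hf X Y f (ext_e X (\<mu>, (\<nu>, t))) s"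
    if "s \<in> SHM Y" for s
  proof -
    obtain \<phi> a b where s: "s = avg Y \<phi> a b" and v: "admissible Y \<phi> a b"
      using \<open>s \<in> SHM Y\<close> unfolding SHM_def by blast
    have "admissible X (\<phi> \<circ> f) a b" using v assms(5) continuous_map_compose by blast
    then show ?thesis
      using ext_e_avg[OF assms(3) v xY] ext_e_avg[OF assms(1) _ xX] Hf_spec(2)[OF assms(5) eX v]
        concat_coord_Hf[OF assms(5) v assms(7,8)] s by simp
  qed
  moreover have "ext_e Y (Hf X Y f \<mu>, (Hf X Y f \<nu>, t)) \<in> topspace (HXtop Y)"
    "Hf X Y f (ext_e X (\<mu>, (\<nu>, t))) \<in> topspace (HXtop Y)"
    using ext_e_spec(1)[OF assms(3)] Hf_spec(1)[OF assms(5)] xY eX by (auto simp: continuous_map_def)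
  ultimately show ?thesis by (auto intro: extensionalityI HXtop_extensional)
qed

end
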